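(* Let $\mathcal{A}$ be a finite alphabet and $\mathbf{p}$ an irreducible pair on $\mathcal{A}$. If $\mathbf{q}=(q_0,q_1)$ is a pair (on some alphabet) such that the permutation $q_1\circ q_0^{-1}$ lies in the non-labeled extended Rauzy class of $\mathbf{p}$, then $\mathrm{ARF}(\mathbf{q})=\mathrm{ARF}(\mathbf{p})$.
   Context: Let $n=\#\mathcal{A}$. A pair is $\mathbf{p}=(p_0,p_1)$ with $p_0,p_1:\mathcal{A}\to\{1,\dots,n\}$ bijections. Irreducible: $p_0^{-1}\{1,\dots,k\}\ne p_1^{-1}\{1,\dots,k\}$ for $1\le k<n$. Rauzy move of type $\varepsilon$: $\varepsilon\mathbf{p}=(p'_0,p'_1)$, $p'_\varepsilon=p_\varepsilon$, and for $z=p_\varepsilon^{-1}(n)$, $p'_{1-\varepsilon}(b)=p_{1-\varepsilon}(b)$ if $p_{1-\varepsilon}(b)\le p_{1-\varepsilon}(z)$, $=p_{1-\varepsilon}(b)+1$ if $p_{1-\varepsilon}(z)<p_{1-\varepsilon}(b)<n$, $=p_{1-\varepsilon}(z)+1$ if $p_{1-\varepsilon}(b)=n$. Left Rauzy move of type $\varepsilon$: $\tilde\varepsilon\mathbf{p}=(p'_0,p'_1)$, $p'_\varepsilon=p_\varepsilon$, and for $a=p_\varepsilon^{-1}(1)$, $p'_{1-\varepsilon}(b)=p_{1-\varepsilon}(a)-1$ if $p_{1-\varepsilon}(b)=1$, $=p_{1-\varepsilon}(b)-1$ if $1<p_{1-\varepsilon}(b)<p_{1-\varepsilon}(a)$,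 unchanged otherwise. The labeled extended Rauzy class of $\mathbf{p}$ is the set of pairs reachable from $\mathbf{p}$ by Rauzy and left Rauzy moves of both types; the non-labeled extended Rauzy class is its image under $(p_0,p_1)\mapsto p_1\circ p_0^{-1}\in\mathfrak{S}_n$. Quadratic form: $\mathcal{Q}_{\mathbf{p}}(v)=\sum_{a}v_a^2+\sum_{\{a,b\}}L_{\mathbf{p}}(a,b)v_av_b \pmod 2$ for $v\in\mathbb{Z}_2^{\mathcal{A}}$, the second sum over unordered pairs of distinct letters, with $L_{\mathbf{p}}(a,b)=1$ if $(p_0(a)-p_0(b))(p_1(a)-p_1(b))<0$ and $0$ otherwise. $\mathrm{ARF}(\mathbf{p})=\#\{v\in\mathbb{Z}_2^{\mathcal{A}}:\mathcal{Q}_{\mathbf{p}}(v)=1\}$. *)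

theory Defs
  imports Main "HOL-Library.Cardinality"
begin

text \<open>A pair on a finite alphabet (the type 'a) is a pair (p0, p1) of maps
  'a => nat, each a bijection onto {1..n} with n = CARD('a).
  The type epsilon in {0,1} is encoded as bool: False = 0, True = 1.\<close>

type_synonym 'a pair = "('a \<Rightarrow> nat) \<times> ('a \<Rightarrow> nat)"

definition is_pair :: "('a::finite) pair \<Rightarrow> bool" where
  "is_pair p \<longleftrightarrow> bij_betw (fst p) UNIV {1..CARD('a)} \<and> bij_betw (snd p) UNIV {1..CARD('a)}"

definition irreducible_pair :: "('a::finite) pair \<Rightarrow> bool" where
  "irreducible_pair p \<longleftrightarrow>
     (\<forall>k. 1 \<le> k \<and> k < CARD('a) \<longrightarrow> fst p -` {1..k} \<noteq> snd p -` {1..k})"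

definition comp_of :: "bool \<Rightarrow> 'a pair \<Rightarrow> ('a \<Rightarrow> nat)" where
  "comp_of e p = (if e then snd p else fst p)"

definition set_comp :: "bool \<Rightarrow> ('a \<Rightarrow> nat) \<Rightarrow> 'a pair \<Rightarrow> 'a pair" where
  "set_comp e f p = (if e then (fst p, f) else (f, snd p))"

definition rauzy_move :: "bool \<Rightarrow> ('a::finite) pair \<Rightarrow> 'a pair" where
  "rauzy_move e p =
     (let n = CARD('a); pe = comp_of e p; po = comp_of (\<not> e) p;
          z = inv pe n;
          po' = (\<lambda>b. if po b \<le> po z then po b
                     else if po b < n then po b + 1
                     else po z + 1)
      in set_comp (\<not> e) po' p)"

definition left_rauzy_move :: "bool \<Rightarrow> ('a::finite) pair \<Rightarrow> 'a pair" where
  "left_rauzy_move e p =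
     (let pe = comp_of e p; po = comp_of (\<not> e) p;
          a = inv pe 1;
          po' = (\<lambda>b. if po b = 1 then po a - 1
                     else if 1 < po b \<and> po b < po a then po b - 1
                     else po b)
      in set_comp (\<not> e) po' p)"

definition ext_rauzy_step :: "('a::finite) pair \<Rightarrow> 'a pair \<Rightarrow> bool" where
  "ext_rauzy_step p q \<longleftrightarrow> (\<exists>e. q = rauzy_move e p \<or> q = left_rauzy_move e p)"

definition labeled_ext_class :: "('a::finite) pair \<Rightarrow> 'a pair set" where
  "labeled_ext_class p = {q. ext_rauzy_step\<^sup>*\<^sup>* p q}"

text \<open>The permutation p1 o p0^{-1} in S_n, encoded as the list of its values
  [sigma 1, ..., sigma n] (so the length records n).\<close>
definition pair_perm :: "('a::finite) pair \<Rightarrow> nat list" where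
  "pair_perm p = map (\<lambda>i. snd p (inv (fst p) i)) [1..<CARD('a) + 1]"

definition nonlabeled_ext_class :: "('a::finite) pair \<Rightarrow> nat list set" where
  "nonlabeled_ext_class p = pair_perm ` labeled_ext_class p"

definition L_pair :: "'a pair \<Rightarrow> 'a \<Rightarrow> 'a \<Rightarrow> bool" where
  "L_pair p a b \<longleftrightarrow>
     (int (fst p a) - int (fst p b)) * (int (snd p a) - int (snd p b)) < 0"

text \<open>Quadratic form mod 2; vectors v in Z_2^A encoded as 'a => bool.
  The second sum ranges over unordered pairs {a,b} of distinct letters.\<close>
definition Q_pair :: "('a::finite) pair \<Rightarrow> ('a \<Rightarrow> bool) \<Rightarrow> nat" where
  "Q_pair p v =
     ((\<Sum>a\<in>UNIV. (of_bool (v a))^2)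
      + (\<Sum>s\<in>{s::'a set. card s = 2}.
           of_bool (\<exists>a b. s = {a, b} \<and> a \<noteq> b \<and> L_pair p a b) * (\<Prod>a\<in>s. of_bool (v a))))
     mod 2"

definition ARF :: "('a::finite) pair \<Rightarrow> nat" where
  "ARF p = card {v :: 'a \<Rightarrow> bool. Q_pair p v = 1}"

end

theory Submission
  imports Defs
begin

text \<open>
  ARF depends only on the intersection graph \<open>L_pair p\<close>: it counts the sets \<open>V\<close> of letters
  for which \<open>|V|\<close> plus the number of edges inside \<open>V\<close> is odd. A Rauzy move of type 0 puts the
  last bottom letter \<open>w\<close> right after the bottom position of the last top letter \<open>z\<close>; this adds
  the neighbourhood of \<open>z\<close> to that of \<open>w\<close> (mod 2), and because \<open>z\<close> and \<open>w\<close> are linked, the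
  transvection toggling \<open>z\<close> in every \<open>V\<close> that contains \<open>w\<close> carries one quadratic form onto the
  other. Moves of type 1 are conjugate to those of type 0 by swapping the rows, and left moves are
  conjugate to right moves by reversing both rows. Irreducibility enters only through the fact that
  the two rows start with different letters and end with different letters, which every move
  preserves. Finally ARF is invariant under relabelling, so it is determined by the permutation.
\<close>

definition edges :: "('a \<Rightarrow> 'a \<Rightarrow> bool) \<Rightarrow> 'a set \<Rightarrow> 'a set set" where
  "edges R V = {{a, b} | a b. a \<in> V \<and> b \<in> V \<and> a \<noteq> b \<and> R a b}"

definition quad_form :: "('a \<Rightarrow> 'a \<Rightarrow> bool) \<Rightarrow> 'a set \<Rightarrow> nat" where
  "quad_form R V = (card V + card (edges R V)) mod 2"

definition arf_count :: "('a::finite \<Rightarrow> 'a \<Rightarrow> bool) \<Rightarrow> nat" where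
  "arf_count R = card {V. quad_form R V = 1}"

lemma prod_of_bool:
  "finite A \<Longrightarrow> (\<Prod>a\<in>A. of_bool (P a) :: 'b::comm_semiring_1) = of_bool (\<forall>a\<in>A. P a)"
  by (induction A rule: finite_induct) auto

lemma Q_pair_eq_quad_form: "Q_pair p v = quad_form (L_pair p) {a. v a}"
proof -
  have "(\<Sum>s\<in>{s::'a set. card s = 2}.
           of_bool (\<exists>a b. s = {a, b} \<and> a \<noteq> b \<and> L_pair p a b) * (\<Prod>a\<in>s. of_bool (v a)))
        = card {s. card s = 2 \<and> (\<exists>a b. s = {a, b} \<and> a \<noteq> b \<and> L_pair p a b) \<and> (\<forall>a\<in>s. v a)}"
    by (simp add: prod_of_bool sum_of_bool_eq[symmetric] of_bool_conj Int_def)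
  also have "{s. card s = 2 \<and> (\<exists>a b. s = {a, b} \<and> a \<noteq> b \<and> L_pair p a b) \<and> (\<forall>a\<in>s. v a)}
             = edges (L_pair p) {a. v a}"
    unfolding edges_def by auto
  finally show ?thesis
    by (simp add: Q_pair_def quad_form_def power2_eq_square)
qed

lemma ARF_eq_arf_count: "ARF p = arf_count (L_pair p)"
proof -
  have "{V. quad_form (L_pair p) V = 1} = Collect ` {v. Q_pair p v = 1}"
    by (auto simp: Q_pair_eq_quad_form image_iff intro!: exI[of _ "\<lambda>a. a \<in> _"])
  then show ?thesis
    unfolding ARF_def arf_count_def by (simp add: card_image inj_on_def Collect_inj)
qed

lemma card_edges_insert:
  assumes sym: "\<And>a b. R a b = R b a" and irr: "\<And>a. \<not> R a a" and "x \<notin> V" "finite V"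
  shows "card (edges R (insert x V)) = card (edges R V) + card {y\<in>V. R x y}"
proof -
  have "edges R (insert x V) = edges R V \<union> (\<lambda>y. {x, y}) ` {y\<in>V. R x y}"
    unfolding edges_def using sym irr by (auto 0 4)
  moreover have "edges R V \<inter> (\<lambda>y. {x, y}) ` {y\<in>V. R x y} = {}"
    using \<open>x \<notin> V\<close> by (auto simp: edges_def doubleton_eq_iff)
  moreover have "inj_on (\<lambda>y. {x, y}) {y\<in>V. R x y}"
    using \<open>x \<notin> V\<close> by (auto simp: inj_on_def doubleton_eq_iff)
  moreover have "finite (edges R V)"
    using \<open>finite V\<close> unfolding edges_def by (auto intro: finite_subset[of _ "Pow V"])
  ultimately show ?thesis
    using \<open>finite V\<close> by (simp add: card_Un_disjoint card_image)
qed

lemma edges_cong: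
  assumes "\<And>a b. a \<noteq> w \<Longrightarrow> b \<noteq> w \<Longrightarrow> R a b = R' a b" and "w \<notin> V"
  shows "edges R V = edges R' V"
  unfolding edges_def using assms by metis

lemma quad_form_insert:
  assumes "\<And>a b. R a b = R b a" and "\<And>a. \<not> R a a" and "x \<notin> V" "finite V"
  shows "quad_form R (insert x V) = (quad_form R V + 1 + card {y\<in>V. R x y}) mod 2"
proof -
  have "quad_form R (insert x V) = (card V + card (edges R V) + 1 + card {y\<in>V. R x y}) mod 2"
    using card_edges_insert[of R x V, OF assms] assms(3,4) by (simp add: quad_form_def add_ac)
  then show ?thesis
    by (metis mod_add_left_eq quad_form_def)
qed

lemma card_neq_mod_2:
  assumes "finite U"
  shows "card {y\<in>U. P y \<noteq> Q y} mod 2 = (card {y\<in>U. P y} + card {y\<in>U. Q y}) mod 2"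
proof -
  have card_eq_sum: "card {y\<in>U. S y} = (\<Sum>y\<in>U. of_bool (S y))" for S
    using assms by (simp add: Int_def)
  have "card {y\<in>U. P y \<noteq> Q y} + 2 * card {y\<in>U. P y \<and> Q y} = card {y\<in>U. P y} + card {y\<in>U. Q y}"
    unfolding card_eq_sum by (simp add: sum.distrib[symmetric] sum_distrib_left) (rule sum.cong, auto)
  then show ?thesis by presburger
qed

definition add_nbhd :: "('a \<Rightarrow> 'a \<Rightarrow> bool) \<Rightarrow> 'a \<Rightarrow> 'a \<Rightarrow> 'a \<Rightarrow> 'a \<Rightarrow> bool" where
  "add_nbhd R z w x y \<longleftrightarrow> R x y \<noteq> ((x = w \<and> y \<noteq> w \<and> R z y) \<or> (y = w \<and> x \<noteq> w \<and> R z x))"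

definition transvection :: "'a \<Rightarrow> 'a \<Rightarrow> 'a set \<Rightarrow> 'a set" where
  "transvection z w V = (if w \<in> V then (if z \<in> V then V - {z} else insert z V) else V)"

lemma transvection_transvection: "z \<noteq> w \<Longrightarrow> transvection z w (transvection z w V) = V"
  unfolding transvection_def by auto

lemma quad_form_add_nbhd:
  assumes sym: "\<And>a b. R a b = R b a" and irr: "\<And>a. \<not> R a a"
    and "z \<noteq> w" "R z w" "finite V"
  shows "quad_form (add_nbhd R z w) V = quad_form R (transvection z w V)"
proof (cases "w \<in> V")
  case False
  have "edges (add_nbhd R z w) V = edges R V"
    by (rule edges_cong[OF _ False]) (auto simp: add_nbhd_def)
  with False show ?thesis by (simp add: quad_form_def transvection_def)
next
  case True
  let ?R' = "add_nbhd R z w"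
  define W where "W = V - {w}"
  have V: "V = insert w W" "w \<notin> W" "finite W" using True \<open>finite V\<close> by (auto simp: W_def)
  have "\<And>x y. ?R' x y = ?R' y x" "\<And>x. \<not> ?R' x x"
    using sym irr by (auto simp: add_nbhd_def)
  note insert' = quad_form_insert[of ?R', OF this]
  note insert = quad_form_insert[of R, OF sym irr]
  have "edges ?R' W = edges R W"
    by (rule edges_cong[OF _ V(2)]) (auto simp: add_nbhd_def)
  then have cong: "quad_form ?R' W = quad_form R W" by (simp add: quad_form_def)
  have row: "{y\<in>W. ?R' w y} = {y\<in>W. R w y \<noteq> R z y}"
    using V(2) by (auto simp: add_nbhd_def)
  have lhs: "quad_form ?R' V = (quad_form R W + 1 + card {y\<in>W. R w y \<noteq> R z y}) mod 2"
    using insert'[OF V(2,3)] by (simp add: V(1) cong row)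
  show ?thesis
  proof (cases "z \<in> W")
    case False
    have "transvection z w V = insert w (insert z W)"
      using V False \<open>z \<noteq> w\<close> by (auto simp: transvection_def)
    moreover have "{y\<in>insert z W. R w y} = insert z {y\<in>W. R w y}"
      using \<open>R z w\<close> sym by auto
    ultimately show ?thesis
      using lhs insert[OF False V(3)] insert[of w "insert z W"] V False \<open>z \<noteq> w\<close>
        card_neq_mod_2[OF V(3), of "R w" "R z"]
      by simp presburger
  next
    case True
    define U where "U = W - {z}"
    have W: "W = insert z U" "z \<notin> U" "w \<notin> U" "finite U" using True V by (auto simp: U_def)
    have "transvection z w V = insert w U"
      using V W \<open>z \<noteq> w\<close> by (auto simp: transvection_def)
    moreover have "{y\<in>W. R w y \<noteq> R z y} = insert z {y\<in>U. R w y \<noteq> R z y}"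
      using W \<open>R z w\<close> sym irr by auto
    ultimately show ?thesis
      using lhs insert[OF W(2,4)] insert[OF W(3,4)] W
        card_neq_mod_2[OF W(4), of "R w" "R z"]
      by simp presburger
  qed
qed

lemma arf_count_add_nbhd:
  fixes R :: "'a::finite \<Rightarrow> 'a \<Rightarrow> bool"
  assumes "\<And>a b. R a b = R b a" and "\<And>a. \<not> R a a" and "z \<noteq> w" "R z w"
  shows "arf_count (add_nbhd R z w) = arf_count R"
proof -
  have "{V. quad_form (add_nbhd R z w) V = 1} = transvection z w ` {V. quad_form R V = 1}"
    using quad_form_add_nbhd[OF assms] transvection_transvection[OF \<open>z \<noteq> w\<close>]
    by (auto simp: image_iff)
  moreover have "inj (transvection z w)"
    by (metis transvection_transvection[OF \<open>z \<noteq> w\<close>] injI)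
  ultimately show ?thesis
    unfolding arf_count_def by (simp add: card_image inj_on_subset)
qed

lemma edges_image:
  assumes "inj h"
  shows "edges R (h ` V) = image h ` edges (\<lambda>a b. R (h a) (h b)) V"
proof (intro set_eqI iffI)
  fix s assume "s \<in> edges R (h ` V)"
  then obtain a b where "s = {h a, h b}" "a \<in> V" "b \<in> V" "h a \<noteq> h b" "R (h a) (h b)"
    unfolding edges_def by blast
  then show "s \<in> image h ` edges (\<lambda>a b. R (h a) (h b)) V"
    unfolding edges_def by (intro image_eqI[of _ _ "{a, b}"]) auto
next
  fix s assume "s \<in> image h ` edges (\<lambda>a b. R (h a) (h b)) V"
  then obtain a b where "s = {h a, h b}" "a \<in> V" "b \<in> V" "a \<noteq> b" "R (h a) (h b)"
    unfolding edges_def by auto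
  then show "s \<in> edges R (h ` V)"
    unfolding edges_def using inj_eq[OF assms] by blast
qed

lemma arf_count_relabel:
  fixes R :: "'a::finite \<Rightarrow> 'a \<Rightarrow> bool" and h :: "'b::finite \<Rightarrow> 'a"
  assumes "bij h"
  shows "arf_count (\<lambda>a b. R (h a) (h b)) = arf_count R"
proof -
  let ?R' = "\<lambda>a b. R (h a) (h b)"
  have "inj h"
    using assms by (rule bij_is_inj)
  then have inj: "inj h" "inj (image h)"
    by (auto simp: inj_image_eq_iff intro: injI)
  have quad_form: "quad_form R (h ` V) = quad_form ?R' V" for V
    using inj by (simp add: quad_form_def edges_image card_image inj_on_subset)
  have "{V. quad_form R V = 1} = image h ` {V. quad_form ?R' V = 1}"
  proof (intro set_eqI iffI)
    fix V assume "V \<in> {V. quad_form R V = 1}"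
    moreover have "V = h ` (h -` V)"
      using assms by (simp add: bij_is_surj surj_image_vimage_eq)
    ultimately show "V \<in> image h ` {V. quad_form ?R' V = 1}"
      by (metis (mono_tags) image_eqI mem_Collect_eq quad_form)
  qed (auto simp: quad_form)
  then show ?thesis
    unfolding arf_count_def using inj by (simp add: card_image inj_on_subset)
qed

lemma L_pair_iff:
  "L_pair p a b \<longleftrightarrow> fst p a < fst p b \<and> snd p b < snd p a \<or> fst p b < fst p a \<and> snd p a < snd p b"
  by (auto simp: L_pair_def mult_less_0_iff)

lemma L_pair_sym: "L_pair p a b = L_pair p b a"
  by (auto simp: L_pair_iff)

lemma L_pair_irrefl: "\<not> L_pair p a a"
  by (simp add: L_pair_iff)

lemma ARF_eq_if_L_pair_eq: "L_pair p = L_pair q \<Longrightarrow> ARF p = ARF q"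
  by (simp add: ARF_eq_arf_count)

lemma ARF_eq_if_L_pair_add_nbhd:
  assumes "L_pair q = add_nbhd (L_pair p) z w" and "z \<noteq> w" "L_pair p z w"
  shows "ARF q = ARF p"
  using arf_count_add_nbhd[of "L_pair p", OF L_pair_sym L_pair_irrefl assms(2,3)] assms(1)
  by (simp add: ARF_eq_arf_count)

lemma L_pair_eq_add_nbhd:
  assumes "\<And>x y. x \<noteq> w \<Longrightarrow> y \<noteq> w \<Longrightarrow> L_pair q x y = L_pair p x y"
    and "\<And>y. y \<noteq> w \<Longrightarrow> L_pair q w y = (L_pair p w y \<noteq> L_pair p z y)"
  shows "L_pair q = add_nbhd (L_pair p) z w"
proof (intro ext)
  fix x y
  consider "x = w" "y = w" | "x = w" "y \<noteq> w" | "x \<noteq> w" "y = w" | "x \<noteq> w" "y \<noteq> w"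
    by blast
  then show "L_pair q x y = add_nbhd (L_pair p) z w x y"
  proof cases
    case 3
    then show ?thesis
      using assms(2)[of x] L_pair_sym[of q x w] L_pair_sym[of p x w] L_pair_sym[of p x z]
      by (simp add: add_nbhd_def)
  qed (use assms in \<open>simp_all add: add_nbhd_def L_pair_irrefl\<close>)
qed

lemma bij_betw_atLeastAtMost_if_inj:
  fixes f :: "'a::finite \<Rightarrow> nat"
  assumes "inj f" and "\<And>x. f x \<in> {1..CARD('a)}"
  shows "bij_betw f UNIV {1..CARD('a)}"
proof -
  have "f ` UNIV = {1..CARD('a)}"
    using assms by (intro card_subset_eq) (auto simp: card_image)
  then show ?thesis
    using assms(1) by (simp add: bij_betw_def)
qed

lemma is_pairD:
  fixes p :: "('a::finite) pair"
  assumes "is_pair p"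
  shows "inj (fst p)" "inj (snd p)" "fst p x \<in> {1..CARD('a)}" "snd p x \<in> {1..CARD('a)}"
    and "k \<in> {1..CARD('a)} \<Longrightarrow> fst p (inv (fst p) k) = k"
    and "k \<in> {1..CARD('a)} \<Longrightarrow> snd p (inv (snd p) k) = k"
  using assms unfolding is_pair_def
  by (auto dest: bij_betw_imp_inj_on bij_betwE bij_betw_inv_into_right)

lemma is_pairI:
  fixes p :: "('a::finite) pair"
  assumes "inj (fst p)" "inj (snd p)" "\<And>x. fst p x \<in> {1..CARD('a)}" "\<And>x. snd p x \<in> {1..CARD('a)}"
  shows "is_pair p"
  unfolding is_pair_def using assms by (intro conjI bij_betw_atLeastAtMost_if_inj)

definition ends_differ :: "('a::finite) pair \<Rightarrow> bool" where
  "ends_differ p \<longleftrightarrow>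
     (\<forall>x. fst p x = 1 \<longrightarrow> snd p x \<noteq> 1) \<and> (\<forall>x. fst p x = CARD('a) \<longrightarrow> snd p x \<noteq> CARD('a))"

lemma rauzy_move_False:
  fixes p :: "('a::finite) pair"
  defines "z \<equiv> inv (fst p) CARD('a)"
  shows "rauzy_move False p = (fst p, \<lambda>b. if snd p b \<le> snd p z then snd p b
     else if snd p b < CARD('a) then snd p b + 1 else snd p z + 1)"
  unfolding z_def by (simp add: rauzy_move_def Let_def comp_of_def set_comp_def)

lemma rauzy_move_False_invariant:
  fixes p :: "('a::finite) pair"
  assumes p: "is_pair p" "ends_differ p"
  defines "z \<equiv> inv (fst p) CARD('a)" and "w \<equiv> inv (snd p) CARD('a)"
  shows "is_pair (rauzy_move False p) \<and> ends_differ (rauzy_move False p)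
    \<and> L_pair (rauzy_move False p) = add_nbhd (L_pair p) z w \<and> z \<noteq> w \<and> L_pair p z w"
proof -
  define n where "n = CARD('a)"
  define q where "q = rauzy_move False p"
  note pD = is_pairD[OF p(1), folded n_def]
  have "n \<in> {1..n}" by (simp add: n_def)
  then have z: "fst p z = n" and w: "snd p w = n"
    using pD(5,6) by (simp_all add: z_def w_def n_def)
  have "snd p z \<noteq> n"
    using p(2) z by (simp add: ends_differ_def n_def)
  then have "z \<noteq> w" "snd p z < n"
    using w pD(4)[of z] by auto
  have fst_q: "fst q = fst p" and snd_q: "snd q b = (if snd p b \<le> snd p z then snd p b
     else if snd p b < n then snd p b + 1 else snd p z + 1)" for b
    by (simp_all add: q_def rauzy_move_False z_def n_def)
  have top_last: "fst p x = n \<longleftrightarrow> x = z" for x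
    using z pD(1) by (auto simp: inj_eq)
  have inj_snd_p: "snd p x = snd p y \<longleftrightarrow> x = y" for x y
    using pD(2) by (simp add: inj_eq)
  have below_w: "y \<noteq> w \<Longrightarrow> snd p y < n" for y
    using inj_snd_p[of y w] w pD(4)[of y] by auto
  have order: "snd q x < snd q y \<longleftrightarrow> snd p x < snd p y" if "x \<noteq> w" "y \<noteq> w" for x y
    using below_w[OF that(1)] below_w[OF that(2)] by (auto simp: snd_q)
  have order_w: "snd q y < snd q w \<longleftrightarrow> snd p y \<le> snd p z"
    "snd q w < snd q y \<longleftrightarrow> snd p z < snd p y" if "y \<noteq> w" for y
    using below_w[OF that] w \<open>snd p z < n\<close> by (auto simp: snd_q)
  have "is_pair q"
  proof (rule is_pairI)
    show "inj (snd q)"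
    proof (rule injI)
      fix x y assume "snd q x = snd q y"
      then show "x = y"
        using order order_w inj_snd_p by (metis less_irrefl linorder_neqE_nat not_le)
    qed
  qed (use pD \<open>snd p z < n\<close> in \<open>auto simp: fst_q snd_q n_def\<close>)
  moreover have "ends_differ q"
  proof -
    have "snd q x = 1 \<longleftrightarrow> snd p x = 1" for x
      using pD(4)[of z] by (auto simp: snd_q)
    with top_last show ?thesis
      using p(2) \<open>snd p z \<noteq> n\<close> by (auto simp: ends_differ_def fst_q snd_q n_def)
  qed
  moreover have "L_pair q = add_nbhd (L_pair p) z w"
  proof (rule L_pair_eq_add_nbhd)
    show "L_pair q x y = L_pair p x y" if "x \<noteq> w" "y \<noteq> w" for x y
      using order[OF that] order[OF that(2,1)] by (simp add: L_pair_iff fst_q)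
    show "L_pair q w y = (L_pair p w y \<noteq> L_pair p z y)" if "y \<noteq> w" for y
      using order_w[OF that] below_w[OF that] w z top_last[of y] pD(3)[of y] that
        inj_eq[OF pD(1)]
      by (auto simp: L_pair_iff fst_q n_def)
  qed
  moreover have "L_pair p z w"
    using z w \<open>z \<noteq> w\<close> \<open>snd p z < n\<close> top_last[of w] pD(3)[of w] by (auto simp: L_pair_iff n_def)
  ultimately show ?thesis
    using \<open>z \<noteq> w\<close> by (simp add: q_def)
qed

lemma is_pair_swap: "is_pair (prod.swap p) \<longleftrightarrow> is_pair p"
  by (auto simp: is_pair_def)

lemma ends_differ_swap: "ends_differ (prod.swap p) \<longleftrightarrow> ends_differ p"
  by (auto simp: ends_differ_def)

lemma L_pair_swap: "L_pair (prod.swap p) = L_pair p"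
  by (intro ext) (auto simp: L_pair_iff)

lemma ARF_swap: "ARF (prod.swap p) = ARF p"
  by (rule ARF_eq_if_L_pair_eq[OF L_pair_swap])

lemma rauzy_move_True_eq_swap: "rauzy_move True p = prod.swap (rauzy_move False (prod.swap p))"
  by (simp add: rauzy_move_def Let_def comp_of_def set_comp_def)

lemma rauzy_move_invariant:
  assumes "is_pair p" "ends_differ p"
  shows "is_pair (rauzy_move e p) \<and> ends_differ (rauzy_move e p) \<and> ARF (rauzy_move e p) = ARF p"
proof -
  have False_case: "is_pair (rauzy_move False p') \<and> ends_differ (rauzy_move False p')
      \<and> ARF (rauzy_move False p') = ARF p'" if "is_pair p'" "ends_differ p'" for p' :: "'a pair"
    using rauzy_move_False_invariant[OF that] ARF_eq_if_L_pair_add_nbhd by blast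
  show ?thesis
  proof (cases e)
    case True
    have "is_pair (prod.swap p)" "ends_differ (prod.swap p)"
      using assms by (simp_all add: is_pair_swap ends_differ_swap)
    then show ?thesis
      using False_case True by (simp add: rauzy_move_True_eq_swap is_pair_swap ends_differ_swap ARF_swap)
  qed (use False_case assms in simp)
qed

definition reverse_pair :: "('a::finite) pair \<Rightarrow> 'a pair" where
  "reverse_pair p = (\<lambda>x. Suc CARD('a) - fst p x, \<lambda>x. Suc CARD('a) - snd p x)"

lemma inj_reflect:
  assumes "inj f" and "\<And>x. f x \<in> {1..n}"
  shows "inj (\<lambda>x. Suc n - f x)"
proof (rule injI)
  fix x y assume "Suc n - f x = Suc n - f y"
  with assms(2)[of x] assms(2)[of y] have "f x = f y" by auto
  with \<open>inj f\<close> show "x = y" by (rule injD)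
qed

lemma is_pair_reverse_pair:
  assumes "is_pair p"
  shows "is_pair (reverse_pair p)"
proof (rule is_pairI)
  note pD = is_pairD[OF assms]
  show "inj (fst (reverse_pair p))" "inj (snd (reverse_pair p))"
    unfolding reverse_pair_def using inj_reflect[OF pD(1) pD(3)] inj_reflect[OF pD(2) pD(4)] by simp_all
  show "fst (reverse_pair p) x \<in> {1..CARD('a)}" "snd (reverse_pair p) x \<in> {1..CARD('a)}" for x
    using pD(3,4)[of x] by (auto simp: reverse_pair_def)
qed

lemma L_pair_reverse_pair:
  assumes "is_pair p"
  shows "L_pair (reverse_pair p) = L_pair p"
proof (intro ext)
  fix a b
  show "L_pair (reverse_pair p) a b = L_pair p a b"
    using is_pairD(3,4)[OF assms, of a] is_pairD(3,4)[OF assms, of b]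
    by (auto simp: L_pair_iff reverse_pair_def)
qed

lemma ARF_reverse_pair: "is_pair p \<Longrightarrow> ARF (reverse_pair p) = ARF p"
  by (rule ARF_eq_if_L_pair_eq[OF L_pair_reverse_pair])

lemma ends_differ_reverse_pair:
  assumes "is_pair p" "ends_differ p"
  shows "ends_differ (reverse_pair p)"
proof -
  have "Suc CARD('a) - k = 1 \<longleftrightarrow> k = CARD('a)" "Suc CARD('a) - k = CARD('a) \<longleftrightarrow> k = 1"
    if "k \<in> {1..CARD('a)}" for k
    using that by auto
  then show ?thesis
    using assms(2) is_pairD(3,4)[OF assms(1)]
    by (simp add: ends_differ_def reverse_pair_def conj_commute)
qed

lemma inv_reflect:
  fixes f :: "'a::finite \<Rightarrow> nat"
  assumes "bij_betw f UNIV {1..CARD('a)}"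
  shows "inv (\<lambda>x. Suc CARD('a) - f x) CARD('a) = inv f 1"
proof (rule inv_f_eq)
  show "inj (\<lambda>x. Suc CARD('a) - f x)"
    using assms by (intro inj_reflect) (auto dest: bij_betw_imp_inj_on bij_betwE)
  show "Suc CARD('a) - f (inv f 1) = CARD('a)"
    using assms by (simp add: bij_betw_inv_into_right)
qed

lemma reflect_reflect:
  assumes "\<And>x. f x \<in> {1..n}"
  shows "(\<lambda>x. Suc n - (Suc n - f x)) = f"
  using assms by (intro ext) (simp add: Suc_diff_le le_SucI)

lemma reflect_shift:
  assumes "\<And>x. f x \<in> {1..n}" and "t \<in> {1..n}" "t \<noteq> 1"
  shows "(\<lambda>x. Suc n - (if Suc n - f x \<le> Suc n - t then Suc n - f x
      else if Suc n - f x < n then Suc n - f x + 1 else Suc n - t + 1))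
    = (\<lambda>x. if f x = 1 then t - 1 else if 1 < f x \<and> f x < t then f x - 1 else f x)"
  apply (rule ext)
  subgoal for x using assms(1)[of x] assms(2,3) by auto
  done

lemma left_rauzy_move_eq_reverse:
  assumes "is_pair p" "ends_differ p"
  shows "left_rauzy_move e p = reverse_pair (rauzy_move e (reverse_pair p))"
proof -
  note pD = is_pairD[OF assms(1)]
  have heads: "snd p (inv (fst p) 1) \<noteq> 1" "fst p (inv (snd p) 1) \<noteq> 1"
    using assms(2) pD(5,6)[of 1] by (auto simp: ends_differ_def)
  have inv_eqs: "inv (\<lambda>x. Suc CARD('a) - fst p x) CARD('a) = inv (fst p) 1"
    "inv (\<lambda>x. Suc CARD('a) - snd p x) CARD('a) = inv (snd p) 1"
    using assms(1) by (simp_all add: inv_reflect is_pair_def)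
  show ?thesis
    using reflect_reflect[of "fst p", OF pD(3)] reflect_reflect[of "snd p", OF pD(4)]
      reflect_shift[of "fst p", OF pD(3) pD(3) heads(2)] reflect_shift[of "snd p", OF pD(4) pD(4) heads(1)]
    by (cases e) (simp_all only: left_rauzy_move_def rauzy_move_def reverse_pair_def Let_def
        comp_of_def set_comp_def inv_eqs if_True if_False not_True_eq_False not_False_eq_True fst_conv snd_conv)
qed

lemma left_rauzy_move_invariant:
  assumes "is_pair p" "ends_differ p"
  shows "is_pair (left_rauzy_move e p) \<and> ends_differ (left_rauzy_move e p)
    \<and> ARF (left_rauzy_move e p) = ARF p"
proof -
  define r where "r = rauzy_move e (reverse_pair p)"
  have "is_pair r" "ends_differ r" "ARF r = ARF (reverse_pair p)"
    using rauzy_move_invariant[OF is_pair_reverse_pair ends_differ_reverse_pair] assms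
    unfolding r_def by blast+
  then show ?thesis
    using assms by (simp add: left_rauzy_move_eq_reverse r_def[symmetric] is_pair_reverse_pair
        ends_differ_reverse_pair ARF_reverse_pair)
qed

lemma ext_rauzy_class_invariant:
  assumes "ext_rauzy_step\<^sup>*\<^sup>* p q" and "is_pair p" "ends_differ p"
  shows "is_pair q \<and> ends_differ q \<and> ARF q = ARF p"
  using assms
  by (induction rule: rtranclp_induct)
    (auto simp: ext_rauzy_step_def dest: rauzy_move_invariant left_rauzy_move_invariant)

lemma irreducible_pair_ends_differ:
  fixes p :: "('a::finite) pair"
  assumes "is_pair p" "irreducible_pair p" and "CARD('a) \<noteq> 1"
  shows "ends_differ p"
proof -
  note pD = is_pairD[OF assms(1)]
  have "1 < CARD('a)"
    using assms(3) zero_less_card_finite[where 'a='a] by linarith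
  have "fst p -` {1..k} \<noteq> snd p -` {1..k}" if "k \<in> {1, CARD('a) - 1}" for k
    using assms(2) that \<open>1 < CARD('a)\<close> by (auto simp: irreducible_pair_def)
  moreover have "fst p -` {1..1} = snd p -` {1..1}" if "fst p x = 1" "snd p x = 1" for x
  proof -
    have "y \<in> fst p -` {1..1} \<longleftrightarrow> y = x" "y \<in> snd p -` {1..1} \<longleftrightarrow> y = x" for y
      using that injD[OF pD(1), of y x] injD[OF pD(2), of y x] by auto
    then show ?thesis by blast
  qed
  moreover have "fst p -` {1..CARD('a) - 1} = snd p -` {1..CARD('a) - 1}"
    if "fst p x = CARD('a)" "snd p x = CARD('a)" for x
  proof -
    have "y \<in> fst p -` {1..CARD('a) - 1} \<longleftrightarrow> y \<noteq> x" "y \<in> snd p -` {1..CARD('a) - 1} \<longleftrightarrow> y \<noteq> x"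
      for y
      using that pD(3,4)[of y] inj_eq[OF pD(1), of y x] inj_eq[OF pD(2), of y x] by auto
    then show ?thesis by blast
  qed
  ultimately show ?thesis
    unfolding ends_differ_def by (metis insertCI)
qed

lemma length_pair_perm: "length (pair_perm (p :: ('a::finite) pair)) = CARD('a)"
  by (simp add: pair_perm_def)

lemma nth_pair_perm:
  fixes p :: "('a::finite) pair"
  assumes "k \<in> {1..CARD('a)}"
  shows "pair_perm p ! (k - 1) = snd p (inv (fst p) k)"
proof -
  have "k - 1 < CARD('a)" "[1..<CARD('a) + 1] ! (k - 1) = k"
    using assms by (auto simp: nth_upt simp del: upt_Suc)
  then show ?thesis
    by (simp add: pair_perm_def del: upt_Suc)
qed

lemma pair_perm_card_1:
  fixes p :: "('a::finite) pair"
  assumes "is_pair p" "CARD('a) = 1"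
  shows "pair_perm p = [1]"
  using assms is_pairD(4)[OF assms(1)] by (simp add: pair_perm_def)

lemma ARF_eq_if_pair_perm_eq:
  fixes p :: "('a::finite) pair" and q :: "('b::finite) pair"
  assumes p: "is_pair p" and q: "is_pair q" and perm: "pair_perm p = pair_perm q"
  shows "ARF q = ARF p"
proof -
  note pD = is_pairD[OF p] and qD = is_pairD[OF q]
  have card: "CARD('b) = CARD('a)"
    using perm length_pair_perm[of p] length_pair_perm[of q] by simp
  define h where "h x = inv (fst p) (fst q x)" for x
  have fst_h: "fst p (h x) = fst q x" for x
    using pD(5) qD(3)[of x] card by (simp add: h_def)
  have snd_h: "snd p (h x) = snd q x" for x
  proof -
    have "snd p (h x) = pair_perm p ! (fst q x - 1)"
      using nth_pair_perm[of "fst q x" p] qD(3)[of x] card by (simp add: h_def)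
    also have "\<dots> = snd q x"
      using nth_pair_perm[of "fst q x" q] qD(3)[of x] qD(1) by (simp add: perm)
    finally show ?thesis .
  qed
  have "inj h"
    by (rule injI) (metis fst_h qD(1) injD)
  then have "bij h"
    using card by (simp add: bij_def card_image card_eq_UNIV_imp_eq_UNIV)
  moreover have "L_pair q = (\<lambda>a b. L_pair p (h a) (h b))"
    by (intro ext) (simp add: L_pair_def fst_h snd_h)
  ultimately show ?thesis
    by (simp add: ARF_eq_arf_count arf_count_relabel)
qed

theorem corollary2p20:
  fixes p :: "('a::finite \<Rightarrow> nat) \<times> ('a \<Rightarrow> nat)"
    and q :: "('b::finite \<Rightarrow> nat) \<times> ('b \<Rightarrow> nat)"
  assumes "is_pair p" and "irreducible_pair p"
    and "is_pair q"
    and "pair_perm q \<in> nonlabeled_ext_class p"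
  shows "ARF q = ARF p"
proof -
  obtain r where "ext_rauzy_step\<^sup>*\<^sup>* p r" and r: "pair_perm r = pair_perm q"
    using assms(4) by (auto simp: nonlabeled_ext_class_def labeled_ext_class_def)
  show ?thesis
  proof (cases "CARD('a) = 1")
    txt \<open>On one letter a left move produces the position 0, so \<open>r\<close> need not be a pair.\<close>
    case True
    moreover have "CARD('b) = CARD('a)"
      using r length_pair_perm[of r] length_pair_perm[of q] by simp
    ultimately have "pair_perm p = pair_perm q"
      using assms(1,3) by (simp add: pair_perm_card_1)
    with assms(1,3) show ?thesis
      by (rule ARF_eq_if_pair_perm_eq)
  next
    case False
    have "ends_differ p"
      using assms(1,2) False by (rule irreducible_pair_ends_differ)
    then have "is_pair r" "ARF r = ARF p"
      using ext_rauzy_class_invariant \<open>ext_rauzy_step\<^sup>*\<^sup>* p r\<close> assms(1) by blast+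
    then show ?thesis
      using ARF_eq_if_pair_perm_eq[OF _ assms(3) r] by simp
  qed
qed

end
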